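(* Let $\Sigma$ be an alphabet with at least three letters and $n\geq 1$. Let $f,g\colon\mathcal{T}(\Sigma)^n\to\mathcal{T}(\Sigma)$ be congruence preserving functions such that $f(a_1,\ldots,a_n)=g(a_1,\ldots,a_n)$ for all $a_1,\ldots,a_n\in\Sigma$. Then $f(t_1,\ldots,t_n)=g(t_1,\ldots,t_n)$ for all $t_1,\ldots,t_n\in\mathcal{T}(\Sigma)$.
   Context: Let $\Sigma$ be an alphabet not containing $0,1$. A binary tree over $\Sigma$ is a finite set $t \subseteq \{0,1\}^*\Sigma$ such that for any $ua, vb \in t$ with $ua \neq vb$, $u$ is not a prefix of $v$ and $v$ is not a prefix of $u$; $\mathcal{T}(\Sigma)$ is the set of such trees, $\mathbf 0=\emptyset$, each letter $a$ is identified with $\{a\}$, and $t\star t' = 0.t\cup 1.t'$. A congruence is an equivalence relation on $\mathcal{T}(\Sigma)$ compatible with $\star$. A function $f\colon\mathcal{T}(\Sigma)^n\to\mathcal{T}(\Sigma)$ is congruence preserving if for every congruence $\sim$ and all $t_i,t_i'$, $t_i\sim t_i'$ for all $i=1,\ldots,n$ implies $f(t_1,\ldots,t_n)\sim f(t_1',\ldots,t_n')$. *)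

theory Defs
  imports Main "HOL-Library.Sublist"
begin

text \<open>A word u a in {0,1}^* Sigma is represented as the pair (u, a), where u is a
bool list (False = 0, True = 1) and a is a letter of the alphabet type 'a.\<close>

definition is_bintree :: "(bool list \<times> 'a) set \<Rightarrow> bool" where
  "is_bintree t \<longleftrightarrow> finite t \<and>
     (\<forall>u a v b. (u, a) \<in> t \<longrightarrow> (v, b) \<in> t \<longrightarrow> (u, a) \<noteq> (v, b) \<longrightarrow>
        \<not> prefix u v \<and> \<not> prefix v u)"

typedef 'a bintree = "{t :: (bool list \<times> 'a) set. is_bintree t}"
  by (rule exI[of _ "{}"]) (simp add: is_bintree_def)

definition tree_star :: "'a bintree \<Rightarrow> 'a bintree \<Rightarrow> 'a bintree" where
  "tree_star t t' = Abs_bintree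
     ((\<lambda>(u, a). (False # u, a)) ` Rep_bintree t \<union> (\<lambda>(u, a). (True # u, a)) ` Rep_bintree t')"

definition tree_leaf :: "'a \<Rightarrow> 'a bintree" where
  "tree_leaf a = Abs_bintree {([], a)}"

definition tree_congruence :: "('a bintree \<times> 'a bintree) set \<Rightarrow> bool" where
  "tree_congruence R \<longleftrightarrow> equiv UNIV R \<and>
     (\<forall>s s' t t'. (s, s') \<in> R \<longrightarrow> (t, t') \<in> R \<longrightarrow> (tree_star s t, tree_star s' t') \<in> R)"

text \<open>An n-ary function T(Sigma)^n -> T(Sigma) is represented as a function on lists,
of which only the values on lists of length n matter.\<close>

definition congruence_preserving :: "nat \<Rightarrow> ('a bintree list \<Rightarrow> 'a bintree) \<Rightarrow> bool" where
  "congruence_preserving n f \<longleftrightarrow>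
     (\<forall>R. tree_congruence R \<longrightarrow>
       (\<forall>ts ts'. length ts = n \<longrightarrow> length ts' = n \<longrightarrow>
          list_all2 (\<lambda>x y. (x, y) \<in> R) ts ts' \<longrightarrow> (f ts, f ts') \<in> R))"

end

theory Submission
  imports Defs
begin

text \<open>
Let sigma(s, T) graft the tree T at every leaf labelled s.  It commutes with the star operation,
so its kernel is a congruence; and a tree A is determined by sigma(s1, T) A and sigma(s2, T) A
whenever s1 and s2 are distinct letters not occurring in T.  Induct on the arguments, leaves
being the lightest trees, and let t be an argument that is not a leaf.  If t carries two labels
l1, l2, deleting the l-leaves of t gives a lighter tree with the same image as t under
sigma(l, 0).  Otherwise, as there are at least three letters, two letters s1, s2 do not occur
in t, and the leaf s has the same image as t under sigma(s, t).  Either way f and g agree on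
the lighter arguments, so their values at the original arguments have the same images under
two separating substitutions.
\<close>

lemma is_bintree_Rep_bintree: "is_bintree (Rep_bintree x)"
  using Rep_bintree by simp

lemma finite_Rep_bintree: "finite (Rep_bintree x)"
  using is_bintree_Rep_bintree unfolding is_bintree_def by blast

lemma is_bintree_subset: "is_bintree A \<Longrightarrow> B \<subseteq> A \<Longrightarrow> is_bintree B"
  unfolding is_bintree_def by (meson finite_subset subsetD)

definition branch :: "bool \<Rightarrow> (bool list \<times> 'a) set \<Rightarrow> (bool list \<times> 'a) set" where
  "branch b S = (\<lambda>(u, a). (b # u, a)) ` S"

lemma mem_branch: "p \<in> branch b S \<longleftrightarrow> (\<exists>u a. p = (b # u, a) \<and> (u, a) \<in> S)"
  unfolding branch_def by auto

lemma is_bintree_branches: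
  assumes "is_bintree A" "is_bintree B"
  shows "is_bintree (branch False A \<union> branch True B)"
  using assms unfolding is_bintree_def branch_def by (auto; blast)

lemma Rep_tree_star:
  "Rep_bintree (tree_star x y) = branch False (Rep_bintree x) \<union> branch True (Rep_bintree y)"
  using is_bintree_branches[OF is_bintree_Rep_bintree is_bintree_Rep_bintree, of x y]
  unfolding tree_star_def branch_def by (simp add: Abs_bintree_inverse)

lemma Rep_tree_leaf: "Rep_bintree (tree_leaf a) = {([], a)}"
proof -
  have "is_bintree {([], a)}"
    unfolding is_bintree_def by auto
  then show ?thesis
    unfolding tree_leaf_def by (simp add: Abs_bintree_inverse)
qed

definition labels :: "'a bintree \<Rightarrow> 'a set" where
  "labels t = snd ` Rep_bintree t"

definition delete_label :: "'a \<Rightarrow> 'a bintree \<Rightarrow> 'a bintree" where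
  "delete_label l t = Abs_bintree {p \<in> Rep_bintree t. snd p \<noteq> l}"

lemma Rep_delete_label: "Rep_bintree (delete_label l t) = {p \<in> Rep_bintree t. snd p \<noteq> l}"
  using is_bintree_subset[OF is_bintree_Rep_bintree, of _ t]
  unfolding delete_label_def by (simp add: Abs_bintree_inverse)

definition is_leaf :: "'a bintree \<Rightarrow> bool" where
  "is_leaf x \<longleftrightarrow> (\<exists>a. x = tree_leaf a)"

text \<open>Leaves weigh 0, so that replacing a one-leaf tree such as 0.a by a leaf is a descent.\<close>

definition weight :: "'a bintree \<Rightarrow> nat" where
  "weight x = (if is_leaf x then 0 else Suc (card (Rep_bintree x)))"

lemma weight_delete_label_less:
  assumes "\<not> is_leaf t" "l \<in> labels t"
  shows "weight (delete_label l t) < weight t"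
proof -
  have "Rep_bintree (delete_label l t) \<subset> Rep_bintree t"
    using assms(2) unfolding Rep_delete_label labels_def by force
  then have "card (Rep_bintree (delete_label l t)) < card (Rep_bintree t)"
    by (simp add: finite_Rep_bintree psubset_card_mono)
  then show ?thesis
    using assms(1) unfolding weight_def by simp
qed

definition star_compatible :: "('a bintree \<Rightarrow> 'b) \<Rightarrow> bool" where
  "star_compatible F \<longleftrightarrow>
     (\<forall>x x' y y'. F x = F x' \<longrightarrow> F y = F y' \<longrightarrow> F (tree_star x y) = F (tree_star x' y'))"

lemma tree_congruence_kernel:
  assumes "star_compatible F"
  shows "tree_congruence {(x, y). F x = F y}"
proof -
  have "equiv UNIV {(x, y). F x = F y}"
    by (rule equivI) (auto intro: refl_onI symI transI)
  then show ?thesis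
    using assms unfolding tree_congruence_def star_compatible_def by blast
qed

lemma congruence_preserving_kernel:
  assumes "congruence_preserving n f" "star_compatible F"
    and "length ts = n" "length ts' = n" "list_all2 (\<lambda>x y. F x = F y) ts ts'"
  shows "F (f ts) = F (f ts')"
  using assms tree_congruence_kernel[OF assms(2)]
  unfolding congruence_preserving_def by fastforce

lemma congruence_preserving_agree_mod_kernel:
  assumes "congruence_preserving n f" "congruence_preserving n g" "star_compatible F"
    and "length ts = n" "j < n" "F (ts ! j) = F x"
    and "f (ts[j := x]) = g (ts[j := x])"
  shows "F (f ts) = F (g ts)"
proof -
  have updated: "list_all2 (\<lambda>x y. F x = F y) ts (ts[j := x])"
    using assms(4-6) by (simp add: list_all2_conv_all_nth nth_list_update)
  have "F (f ts) = F (f (ts[j := x]))"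
    by (rule congruence_preserving_kernel[OF assms(1,3,4) _ updated]) (simp add: assms(4))
  moreover have "F (g ts) = F (g (ts[j := x]))"
    by (rule congruence_preserving_kernel[OF assms(2,3,4) _ updated]) (simp add: assms(4))
  ultimately show ?thesis
    using assms(7) by simp
qed

definition subst_leaves ::
  "'a \<Rightarrow> (bool list \<times> 'a) set \<Rightarrow> (bool list \<times> 'a) set \<Rightarrow> (bool list \<times> 'a) set" where
  "subst_leaves s T A = {p \<in> A. snd p \<noteq> s} \<union> {(u @ w, b) | u w b. (u, s) \<in> A \<and> (w, b) \<in> T}"

lemma mem_subst_leaves:
  "(v, c) \<in> subst_leaves s T A \<longleftrightarrow>
     (v, c) \<in> A \<and> c \<noteq> s \<or> (\<exists>u w. v = u @ w \<and> (u, s) \<in> A \<and> (w, c) \<in> T)"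
  unfolding subst_leaves_def by auto

lemma subst_leaves_Un: "subst_leaves s T (A \<union> B) = subst_leaves s T A \<union> subst_leaves s T B"
  unfolding subst_leaves_def by auto

lemma mem_subst_leaves_branch:
  "(v, c) \<in> subst_leaves s T (branch b A) \<longleftrightarrow> (v, c) \<in> branch b (subst_leaves s T A)"
proof
  assume "(v, c) \<in> subst_leaves s T (branch b A)"
  then consider "(v, c) \<in> branch b A" "c \<noteq> s"
    | u w where "v = b # u @ w" "(u, s) \<in> A" "(w, c) \<in> T"
    unfolding mem_subst_leaves mem_branch by auto
  then show "(v, c) \<in> branch b (subst_leaves s T A)"
    by cases (auto simp: mem_branch mem_subst_leaves)
next
  assume "(v, c) \<in> branch b (subst_leaves s T A)"
  then obtain v' where v: "v = b # v'" and "(v', c) \<in> subst_leaves s T A"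
    unfolding mem_branch by auto
  then consider "(v', c) \<in> A" "c \<noteq> s" | u w where "v' = u @ w" "(u, s) \<in> A" "(w, c) \<in> T"
    unfolding mem_subst_leaves by blast
  then show "(v, c) \<in> subst_leaves s T (branch b A)"
  proof cases
    case 1
    then show ?thesis
      using v by (auto simp: mem_subst_leaves mem_branch)
  next
    case (2 u w)
    then have "v = (b # u) @ w" "(b # u, s) \<in> branch b A"
      using v by (auto simp: mem_branch)
    then show ?thesis
      using 2(3) unfolding mem_subst_leaves by blast
  qed
qed

lemma subst_leaves_branch: "subst_leaves s T (branch b A) = branch b (subst_leaves s T A)"
  using mem_subst_leaves_branch by fast

lemma star_compatible_subst_leaves: "star_compatible (\<lambda>x. subst_leaves s T (Rep_bintree x))"
  unfolding star_compatible_def by (simp add: Rep_tree_star subst_leaves_Un subst_leaves_branch)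

lemma subst_leaves_fresh: "s \<notin> snd ` A \<Longrightarrow> subst_leaves s T A = A"
  unfolding subst_leaves_def by force

lemma subst_leaves_leaf: "subst_leaves s T {([], s)} = T"
  unfolding subst_leaves_def by auto

lemma subst_leaves_empty: "subst_leaves s {} A = {p \<in> A. snd p \<noteq> s}"
  unfolding subst_leaves_def by auto

text \<open>
Were (u, a) produced in B by grafting at an s-leaf (u', s) of B, that leaf would survive the
s'-substitution, hence lie in A at a position that is a proper prefix of u.
\<close>

lemma mem_of_subst_leaves_eq:
  assumes "s \<noteq> s'" "s \<notin> snd ` T" "is_bintree A"
    and "subst_leaves s T A = subst_leaves s T B" "subst_leaves s' T A = subst_leaves s' T B"
    and "(u, a) \<in> A" "a \<noteq> s"
  shows "(u, a) \<in> B"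
proof (rule ccontr)
  assume "(u, a) \<notin> B"
  moreover have "(u, a) \<in> subst_leaves s T A"
    using assms(6,7) by (simp add: mem_subst_leaves)
  then have "(u, a) \<in> subst_leaves s T B"
    using assms(4) by simp
  ultimately obtain u' w where u': "u = u' @ w" "(u', s) \<in> B"
    unfolding mem_subst_leaves by blast
  then have "(u', s) \<in> subst_leaves s' T A"
    using assms(1,5) by (simp add: mem_subst_leaves)
  then have "(u', s) \<in> A"
    using assms(2) unfolding mem_subst_leaves by force
  moreover have "prefix u' u"
    using u'(1) by simp
  ultimately show False
    using assms(3,6,7) unfolding is_bintree_def by blast
qed

lemma subst_leaves_two_letters_inj:
  assumes "s1 \<noteq> s2" "s1 \<notin> snd ` T" "s2 \<notin> snd ` T" "is_bintree A" "is_bintree B"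
    and "subst_leaves s1 T A = subst_leaves s1 T B" "subst_leaves s2 T A = subst_leaves s2 T B"
  shows "A = B"
proof -
  have subset: "A' \<subseteq> B'"
    if "is_bintree A'" "subst_leaves s1 T A' = subst_leaves s1 T B'"
      "subst_leaves s2 T A' = subst_leaves s2 T B'" for A' B'
  proof (rule subrelI)
    fix u a assume "(u, a) \<in> A'"
    show "(u, a) \<in> B'"
    proof (cases "a = s1")
      case True
      then show ?thesis
        using mem_of_subst_leaves_eq[of s2 s1 T A' B' u a] assms(1,3) that \<open>(u, a) \<in> A'\<close>
        by simp
    next
      case False
      then show ?thesis
        using mem_of_subst_leaves_eq[of s1 s2 T A' B' u a] assms(1,2) that \<open>(u, a) \<in> A'\<close>
        by simp
    qed
  qed
  show ?thesis
    using subset[of A B] subset[of B A] assms(4-7) by simp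
qed

lemma congruence_preserving_agree_by_deletion:
  assumes "congruence_preserving n f" "congruence_preserving n g" "length ts = n" "j < n"
    and "l1 \<noteq> l2" "l1 \<in> labels (ts ! j)" "l2 \<in> labels (ts ! j)"
    and "\<And>l. l \<in> labels (ts ! j) \<Longrightarrow>
           f (ts[j := delete_label l (ts ! j)]) = g (ts[j := delete_label l (ts ! j)])"
  shows "f ts = g ts"
proof -
  have agree: "subst_leaves l {} (Rep_bintree (f ts)) = subst_leaves l {} (Rep_bintree (g ts))"
    if "l \<in> labels (ts ! j)" for l
    by (rule congruence_preserving_agree_mod_kernel[OF assms(1,2) star_compatible_subst_leaves
          assms(3,4) _ assms(8)[OF that]])
      (simp add: subst_leaves_empty Rep_delete_label)
  have "Rep_bintree (f ts) = Rep_bintree (g ts)"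
    by (rule subst_leaves_two_letters_inj[OF assms(5), of "{}"])
      (simp_all add: is_bintree_Rep_bintree agree assms(6,7))
  then show ?thesis
    by (simp add: Rep_bintree_inject)
qed

lemma congruence_preserving_agree_by_leaf:
  assumes "congruence_preserving n f" "congruence_preserving n g" "length ts = n" "j < n"
    and "s1 \<noteq> s2" "s1 \<notin> labels (ts ! j)" "s2 \<notin> labels (ts ! j)"
    and "\<And>s. s \<notin> labels (ts ! j) \<Longrightarrow> f (ts[j := tree_leaf s]) = g (ts[j := tree_leaf s])"
  shows "f ts = g ts"
proof -
  let ?T = "Rep_bintree (ts ! j)"
  have agree: "subst_leaves s ?T (Rep_bintree (f ts)) = subst_leaves s ?T (Rep_bintree (g ts))"
    if "s \<notin> labels (ts ! j)" for s
    by (rule congruence_preserving_agree_mod_kernel[OF assms(1,2) star_compatible_subst_leaves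
          assms(3,4) _ assms(8)[OF that]])
      (use that in \<open>simp add: labels_def subst_leaves_fresh Rep_tree_leaf subst_leaves_leaf\<close>)
  have "Rep_bintree (f ts) = Rep_bintree (g ts)"
    by (rule subst_leaves_two_letters_inj[OF assms(5), of ?T])
      (use assms(6,7) in \<open>simp_all add: is_bintree_Rep_bintree agree labels_def\<close>)
  then show ?thesis
    by (simp add: Rep_bintree_inject)
qed

lemma congruence_preserving_agree_if_agree_on_lighter:
  fixes f g :: "('a::finite) bintree list \<Rightarrow> 'a bintree"
  assumes "card (UNIV :: 'a set) \<ge> 3"
    and "congruence_preserving n f" "congruence_preserving n g" "length ts = n" "j < n"
    and "\<not> is_leaf (ts ! j)"
    and "\<And>x. weight x < weight (ts ! j) \<Longrightarrow> f (ts[j := x]) = g (ts[j := x])"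
  shows "f ts = g ts"
proof (cases "card (labels (ts ! j)) \<le> 1")
  case True
  then have "\<not> card (UNIV - labels (ts ! j)) \<le> Suc 0"
    using assms(1) by (simp add: card_Diff_subset)
  then obtain s1 s2 where s12: "s1 \<notin> labels (ts ! j)" "s2 \<notin> labels (ts ! j)" "s1 \<noteq> s2"
    using card_le_Suc0_iff_eq[OF finite, of "UNIV - labels (ts ! j)"] by blast
  have "weight (tree_leaf s) < weight (ts ! j)" for s
    using assms(6) unfolding weight_def is_leaf_def by auto
  then have "f (ts[j := tree_leaf s]) = g (ts[j := tree_leaf s])" for s
    by (rule assms(7))
  then show ?thesis
    using congruence_preserving_agree_by_leaf[OF assms(2-5) s12(3,1,2)] by blast
next
  case False
  then obtain l1 l2 where l12: "l1 \<in> labels (ts ! j)" "l2 \<in> labels (ts ! j)" "l1 \<noteq> l2"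
    using card_le_Suc0_iff_eq[OF finite, of "labels (ts ! j)"] unfolding One_nat_def by blast
  have "f (ts[j := delete_label l (ts ! j)]) = g (ts[j := delete_label l (ts ! j)])"
    if "l \<in> labels (ts ! j)" for l
    by (rule assms(7)) (rule weight_delete_label_less[OF assms(6) that])
  then show ?thesis
    using congruence_preserving_agree_by_deletion[OF assms(2-5) l12(3,1,2)] by blast
qed

lemma sum_list_map_update_less:
  fixes w :: "'b \<Rightarrow> nat"
  assumes "k < length xs" "w x < w (xs ! k)"
  shows "sum_list (map w (xs[k := x])) < sum_list (map w xs)"
proof -
  have "sum_list (map w (xs[k := x])) = sum_list (map w xs) + w x - w (xs ! k)"
    using assms(1) by (simp add: map_update sum_list_update)
  moreover have "w (xs ! k) \<le> sum_list (map w xs)"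
    using assms(1) elem_le_sum_list[of k "map w xs"] by simp
  ultimately show ?thesis
    using assms(2) by linarith
qed

theorem mainTheorem5:
  fixes f g :: "('a::finite) bintree list \<Rightarrow> 'a bintree" and n :: nat
  assumes "card (UNIV :: 'a set) \<ge> 3"
    and "n \<ge> 1"
    and "congruence_preserving n f"
    and "congruence_preserving n g"
    and "\<forall>as :: 'a list. length as = n \<longrightarrow> f (map tree_leaf as) = g (map tree_leaf as)"
  shows "\<forall>ts. length ts = n \<longrightarrow> f ts = g ts"
proof (intro allI impI)
  fix ts :: "'a bintree list"
  assume "length ts = n"
  then show "f ts = g ts"
  proof (induction ts rule: measure_induct_rule[where f = "\<lambda>ts. sum_list (map weight ts)"])
    case (less ts)
    show ?case
    proof (cases "\<forall>x \<in> set ts. is_leaf x")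
      case True
      then obtain as where "ts = map tree_leaf as"
        unfolding is_leaf_def ex_map_conv[symmetric] by blast
      then show ?thesis
        using assms(5) less.prems by simp
    next
      case False
      then obtain j where j: "j < length ts" "\<not> is_leaf (ts ! j)"
        by (auto simp: in_set_conv_nth)
      have "f (ts[j := x]) = g (ts[j := x])" if "weight x < weight (ts ! j)" for x
        using less sum_list_map_update_less[OF j(1) that] by simp
      then show ?thesis
        using congruence_preserving_agree_if_agree_on_lighter[OF assms(1,3,4) less.prems] j less.prems
        by simp
    qed
  qed
qed

end
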